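(* Let $\rho\in(0,\infty)$ and $d=d(L)\to0$ with $dL\to\infty$. For every $H\in\mathcal D(\hat{\mathcal G})$, $$\lim_{N/L\to\rho}\ \sup_{\eta\in\Omega_{L,N}}\Big|\frac1{dL}\mathfrak L_{L,N}\big(H\circ\hat\mu_{L,N}^{(\cdot)}\big)(\eta)-\hat{\mathcal G}H(\hat\mu_{L,N}^{(\eta)})\Big|=0.$$
   Context: Inclusion process: $\Omega_{L,N}=\{\eta\in\mathbb N_0^L:\sum_x\eta_x=N\}$, $\mathfrak L_{L,N}f(\eta)=\sum_{x\ne y}\eta_x(d+\eta_y)[f(\eta^{x,y})-f(\eta)]$, $\eta^{x,y}=\eta-e^x+e^y$; "$N/L\to\rho$" means $N,L\to\infty$ with $N/L\to\rho$. $\overline{\mathbb R}_+=[0,\infty]$; $\hat\mu^{(\eta)}_{L,N}=\sum_x\frac{\eta_x}N\delta_{dL\eta_x/N}\in\mathcal M_1(\overline{\mathbb R}_+)$. $\hat Ah(z)=zh''(z)+(2-z)h'(z)+(h(0)-h(z))$ on $\mathcal D(\hat A)=\{h\in C(\overline{\mathbb R}_+):h(\infty)=0,h|_{\mathbb R_+}\in C_c^3(\mathbb R_+)\}\cup\{\text{constants}\}$. $\mathcal D(\hat{\mathcal G})$ is the algebra generated by $\mu\mapsto\mu(h)$, $h\in\mathcal D(\hat A)$, and $\hat{\mathcal G}\prod_{k=1}^n\mu(h_k)=\sum_k\mu(\hat Ah_k)\prod_{m\ne k}\mu(h_m)$, extended linearly. *)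

theory Defs
  imports "HOL-Analysis.Analysis"
begin

definition Omega :: "nat \<Rightarrow> nat \<Rightarrow> (nat \<Rightarrow> nat) set" where
  "Omega L N = {\<eta>. (\<forall>x\<ge>L. \<eta> x = 0) \<and> (\<Sum>x<L. \<eta> x) = N}"

definition jump :: "(nat \<Rightarrow> nat) \<Rightarrow> nat \<Rightarrow> nat \<Rightarrow> (nat \<Rightarrow> nat)" where
  "jump \<eta> x y = (\<eta>(x := \<eta> x - 1))(y := \<eta> y + 1)"

definition gen :: "nat \<Rightarrow> real \<Rightarrow> ((nat \<Rightarrow> nat) \<Rightarrow> real) \<Rightarrow> (nat \<Rightarrow> nat) \<Rightarrow> real" where
  "gen L d f \<eta> = (\<Sum>x<L. \<Sum>y\<in>{..<L} - {x}.
       real (\<eta> x) * (d + real (\<eta> y)) * (f (jump \<eta> x y) - f \<eta>))"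

text \<open>Pairing of the empirical measure
  sum_x (eta_x/N) delta_{dL eta_x/N} on [0,\<infinity>] with a function h.\<close>
definition emp :: "nat \<Rightarrow> nat \<Rightarrow> real \<Rightarrow> (nat \<Rightarrow> nat) \<Rightarrow> (ennreal \<Rightarrow> real) \<Rightarrow> real" where
  "emp L N d \<eta> h = (\<Sum>x<L. (real (\<eta> x) / real N) *
       h (ennreal (d * real L * real (\<eta> x) / real N)))"

definition hr :: "(ennreal \<Rightarrow> real) \<Rightarrow> real \<Rightarrow> real" where
  "hr h r = h (ennreal r)"

definition D1 :: "(real \<Rightarrow> real) \<Rightarrow> real \<Rightarrow> real" where
  "D1 f x = (SOME D. (f has_real_derivative D) (at x within {0..}))"

definition C3c_Rplus :: "(real \<Rightarrow> real) \<Rightarrow> bool" where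
  "C3c_Rplus f \<longleftrightarrow> (\<exists>f1 f2 f3. (\<forall>x\<ge>0.
       (f has_real_derivative f1 x) (at x within {0..}) \<and>
       (f1 has_real_derivative f2 x) (at x within {0..}) \<and>
       (f2 has_real_derivative f3 x) (at x within {0..})) \<and>
     continuous_on {0..} f3 \<and> (\<exists>R. \<forall>x\<ge>R. f x = 0))"

definition domA :: "(ennreal \<Rightarrow> real) \<Rightarrow> bool" where
  "domA h \<longleftrightarrow> (continuous_on UNIV h \<and> h \<infinity> = 0 \<and> C3c_Rplus (hr h))
              \<or> (\<exists>c. h = (\<lambda>_. c))"

definition Ahat :: "(ennreal \<Rightarrow> real) \<Rightarrow> ennreal \<Rightarrow> real" where
  "Ahat h z = (if z = \<infinity> then h 0 - h \<infinity>
     else (let r = enn2real z in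
        r * D1 (D1 (hr h)) r + (2 - r) * D1 (hr h) r + (h 0 - h z)))"

text \<open>An element of D(G-hat) is given by a representation
  sum_j c_j prod_k mu(h_jk); mu is given through its pairing map h \<mapsto> mu(h).\<close>
type_synonym polyrep = "(real \<times> (ennreal \<Rightarrow> real) list) list"

definition polyrep_ok :: "polyrep \<Rightarrow> bool" where
  "polyrep_ok P \<longleftrightarrow> (\<forall>(c, hs) \<in> set P. \<forall>h \<in> set hs. domA h)"

definition evalH :: "polyrep \<Rightarrow> ((ennreal \<Rightarrow> real) \<Rightarrow> real) \<Rightarrow> real" where
  "evalH P mu = (\<Sum>(c, hs) \<leftarrow> P. c * prod_list (map mu hs))"

definition genH :: "polyrep \<Rightarrow> ((ennreal \<Rightarrow> real) \<Rightarrow> real) \<Rightarrow> real" where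
  "genH P mu = (\<Sum>(c, hs) \<leftarrow> P. c * (\<Sum>k<length hs.
       mu (Ahat (hs ! k)) * (\<Prod>m\<in>{..<length hs} - {k}. mu (hs ! m))))"

end

(* The empirical measure pairs a configuration with h through the one-site profile
   g k = (k/N) h (u k), u = dL/N, summed over the sites.  The generator acts on such a sum site
   by site: a site holding k particles contributes k (N - k) times the second difference of g plus
   d-weighted first differences.  A third order Taylor expansion of h, together with its compact
   support (which keeps z h'(z) and z^2 h''(z) bounded), shows that (1/dL) times the generator of
   mu(h) equals mu(A-hat h) up to O(u + 1/(dL) + 1/L + d), uniformly on Omega.  Products follow
   from the Leibniz rule: the extra carre du champ term is O(1/N + 1/(dL)), because a single jump
   changes every mu(h) by O(1/N).  Linearity then covers all polynomial functionals. *)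

theory Submission
  imports Defs
begin

section \<open>The limit N/L \<rightarrow> \<rho>\<close>

definition ratio_limit :: "real \<Rightarrow> (nat \<times> nat) filter" where
  "ratio_limit \<rho> = inf (filtercomap fst at_top) (filtercomap (\<lambda>(L, N). real N / real L) (nhds \<rho>))"

lemma eventually_ratio_limit:
  "eventually P (ratio_limit \<rho>) \<longleftrightarrow>
     (\<exists>\<delta>>0. \<exists>L0. \<forall>L N. L0 \<le> L \<and> \<bar>real N / real L - \<rho>\<bar> < \<delta> \<longrightarrow> P (L, N))"
proof
  assume "eventually P (ratio_limit \<rho>)"
  then obtain Q1 Q2 where Q1: "eventually Q1 (filtercomap fst at_top)"
    and Q2: "eventually Q2 (filtercomap (\<lambda>(L, N). real N / real L) (nhds \<rho>))"
    and P: "\<And>x. Q1 x \<Longrightarrow> Q2 x \<Longrightarrow> P x"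
    unfolding ratio_limit_def eventually_inf by blast
  from Q1 obtain L0 where L0: "\<And>L N. L0 \<le> L \<Longrightarrow> Q1 (L, N)"
    unfolding eventually_filtercomap eventually_at_top_linorder by fastforce
  from Q2 obtain \<delta> where "\<delta> > 0" and \<delta>: "\<And>L N. \<bar>real N / real L - \<rho>\<bar> < \<delta> \<Longrightarrow> Q2 (L, N)"
    unfolding eventually_filtercomap eventually_nhds_metric dist_real_def by fastforce
  show "\<exists>\<delta>>0. \<exists>L0. \<forall>L N. L0 \<le> L \<and> \<bar>real N / real L - \<rho>\<bar> < \<delta> \<longrightarrow> P (L, N)"
    using \<open>\<delta> > 0\<close> L0 \<delta> P by blast
next
  assume "\<exists>\<delta>>0. \<exists>L0. \<forall>L N. L0 \<le> L \<and> \<bar>real N / real L - \<rho>\<bar> < \<delta> \<longrightarrow> P (L, N)"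
  then obtain \<delta> L0 where "\<delta> > 0" and P: "\<And>L N. L0 \<le> L \<Longrightarrow> \<bar>real N / real L - \<rho>\<bar> < \<delta> \<Longrightarrow> P (L, N)"
    by blast
  have "eventually (\<lambda>x. L0 \<le> fst x) (filtercomap fst at_top)"
    by (auto simp: eventually_filtercomap eventually_at_top_linorder)
  moreover have "eventually (\<lambda>(L, N). \<bar>real N / real L - \<rho>\<bar> < \<delta>) (filtercomap (\<lambda>(L, N). real N / real L) (nhds \<rho>))"
    using \<open>\<delta> > 0\<close> unfolding eventually_filtercomap eventually_nhds_metric dist_real_def
    by (auto simp: case_prod_beta)
  ultimately show "eventually P (ratio_limit \<rho>)"
    unfolding ratio_limit_def eventually_inf using P by fastforce
qed

lemma filterlim_fst_ratio_limit: "filterlim fst at_top (ratio_limit \<rho>)"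
  unfolding ratio_limit_def by (rule filterlim_mono[OF filterlim_filtercomap order.refl inf_le1])

lemma tendsto_ratio_limit: "((\<lambda>(L, N). real N / real L) \<longlongrightarrow> \<rho>) (ratio_limit \<rho>)"
  unfolding ratio_limit_def by (rule filterlim_mono[OF filterlim_filtercomap order.refl inf_le2])

lemma tendsto_ratio_limit_fst: "f \<longlonglongrightarrow> c \<Longrightarrow> ((\<lambda>(L, N). f L) \<longlongrightarrow> c) (ratio_limit \<rho>)"
  unfolding case_prod_beta' by (rule filterlim_compose[OF _ filterlim_fst_ratio_limit])

locale inclusion_scaling =
  fixes \<rho> :: real and d :: "nat \<Rightarrow> real"
  assumes rho_pos: "\<rho> > 0"
    and d_tendsto: "d \<longlonglongrightarrow> 0"
    and dL_at_top: "filterlim (\<lambda>L. d L * real L) at_top sequentially"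
begin

lemma tendsto_d: "((\<lambda>(L, N). d L) \<longlongrightarrow> 0) (ratio_limit \<rho>)"
  by (rule tendsto_ratio_limit_fst[OF d_tendsto])

lemma tendsto_inverse_L: "((\<lambda>(L, N). 1 / real L) \<longlongrightarrow> 0) (ratio_limit \<rho>)"
  by (rule tendsto_ratio_limit_fst) (rule lim_const_over_n)

lemma tendsto_inverse_dL: "((\<lambda>(L, N). 1 / (d L * real L)) \<longlongrightarrow> 0) (ratio_limit \<rho>)"
  by (rule tendsto_ratio_limit_fst, rule tendsto_divide_0[OF tendsto_const]) (rule filterlim_at_top_imp_at_infinity[OF dL_at_top])

lemma eventually_sizes_pos:
  "\<forall>\<^sub>F (L, N) in ratio_limit \<rho>. 0 < L \<and> 0 < N \<and> 0 < d L"
proof -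
  have "\<forall>\<^sub>F (L, N) in ratio_limit \<rho>. 0 < real N / real L"
    using order_tendstoD(1)[OF tendsto_ratio_limit rho_pos] by (simp add: case_prod_beta')
  moreover have "\<forall>\<^sub>F (L, N) in ratio_limit \<rho>. 0 < d L * real L"
  proof -
    have "filterlim (\<lambda>x. d (fst x) * real (fst x)) at_top (ratio_limit \<rho>)"
      by (rule filterlim_compose[OF dL_at_top filterlim_fst_ratio_limit])
    then show ?thesis by (simp add: filterlim_at_top_dense case_prod_beta')
  qed
  ultimately show ?thesis
    by eventually_elim (auto simp: zero_less_divide_iff zero_less_mult_iff)
qed

lemma tendsto_spacing: "((\<lambda>(L, N). d L * real L / real N) \<longlongrightarrow> 0) (ratio_limit \<rho>)"
proof -
  have "((\<lambda>(L, N). d L / (real N / real L)) \<longlongrightarrow> 0 / \<rho>) (ratio_limit \<rho>)"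
    using tendsto_divide[OF tendsto_d tendsto_ratio_limit] rho_pos by (simp add: case_prod_beta')
  then show ?thesis by (simp add: case_prod_beta')
qed

lemma tendsto_inverse_N: "((\<lambda>(L, N). 1 / real N) \<longlongrightarrow> 0) (ratio_limit \<rho>)"
proof -
  have "((\<lambda>(L, N). (1 / real L) / (real N / real L)) \<longlongrightarrow> 0 / \<rho>) (ratio_limit \<rho>)"
    using tendsto_divide[OF tendsto_inverse_L tendsto_ratio_limit] rho_pos by (simp add: case_prod_beta')
  moreover have "\<forall>\<^sub>F (L, N) in ratio_limit \<rho>. (1 / real L) / (real N / real L) = 1 / real N"
    using eventually_sizes_pos by eventually_elim auto
  ultimately show ?thesis
    by (auto simp: case_prod_beta' elim!: Lim_transform_eventually)
qed

end

section \<open>The generator of the inclusion process\<close>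

lemma Omega_sum_real: "\<eta> \<in> Omega L N \<Longrightarrow> (\<Sum>x<L. real (\<eta> x)) = real N"
  unfolding Omega_def by (simp flip: of_nat_sum)

lemma Omega_le: "\<eta> \<in> Omega L N \<Longrightarrow> x < L \<Longrightarrow> \<eta> x \<le> N"
  unfolding Omega_def using member_le_sum[of x "{..<L}" \<eta>] by auto

lemma sum_jump:
  fixes G :: "nat \<Rightarrow> 'a::comm_ring"
  assumes "x < L" "y < L" "x \<noteq> y"
  shows "(\<Sum>z<L. G (jump \<eta> x y z)) =
    (\<Sum>z<L. G (\<eta> z)) + (G (\<eta> x - 1) - G (\<eta> x)) + (G (\<eta> y + 1) - G (\<eta> y))"
proof -
  have "(\<Sum>z<L. G (jump \<eta> x y z) - G (\<eta> z)) =
      (\<Sum>z<L. (if z = x then G (\<eta> x - 1) - G (\<eta> x) else 0) + (if z = y then G (\<eta> y + 1) - G (\<eta> y) else 0))"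
    using assms(3) by (intro sum.cong) (auto simp: jump_def)
  then show ?thesis
    using assms by (simp add: sum_subtractf sum.distrib algebra_simps)
qed

lemma jump_Omega:
  assumes \<eta>: "\<eta> \<in> Omega L N" and "x < L" "y < L" "x \<noteq> y" "0 < \<eta> x"
  shows "jump \<eta> x y \<in> Omega L N"
proof -
  have "(\<Sum>z<L. int (jump \<eta> x y z)) = (\<Sum>z<L. int (\<eta> z))"
    using sum_jump[of x L y int \<eta>] assms(2-5) by simp
  then have "(\<Sum>z<L. jump \<eta> x y z) = N"
    using \<eta> unfolding Omega_def by (simp flip: of_nat_sum)
  moreover have "\<forall>z\<ge>L. jump \<eta> x y z = 0"
    using \<eta> assms(2,3) by (auto simp: Omega_def jump_def)
  ultimately show ?thesis by (simp add: Omega_def)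
qed

lemma gen_add: "gen L d (\<lambda>\<xi>. f \<xi> + g \<xi>) \<eta> = gen L d f \<eta> + gen L d g \<eta>"
  unfolding gen_def by (simp add: sum.distrib[symmetric] algebra_simps)

lemma gen_cmult: "gen L d (\<lambda>\<xi>. c * f \<xi>) \<eta> = c * gen L d f \<eta>"
  unfolding gen_def by (simp add: sum_distrib_left algebra_simps)

lemma gen_mult:
  "gen L d (\<lambda>\<xi>. f \<xi> * g \<xi>) \<eta> = f \<eta> * gen L d g \<eta> + g \<eta> * gen L d f \<eta> +
     (\<Sum>x<L. \<Sum>y\<in>{..<L} - {x}. real (\<eta> x) * (d + real (\<eta> y)) *
        ((f (jump \<eta> x y) - f \<eta>) * (g (jump \<eta> x y) - g \<eta>)))"
  unfolding gen_def by (simp add: sum_distrib_left sum.distrib[symmetric] algebra_simps)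

lemma gen_sum_sites:
  fixes G :: "nat \<Rightarrow> real"
  assumes \<eta>: "\<eta> \<in> Omega L N"
  shows "gen L d (\<lambda>\<xi>. \<Sum>z<L. G (\<xi> z)) \<eta> =
    (\<Sum>x<L. real (\<eta> x) * (d * (real L - 1) + real N - real (\<eta> x)) * (G (\<eta> x - 1) - G (\<eta> x))
         + (d + real (\<eta> x)) * (real N - real (\<eta> x)) * (G (\<eta> x + 1) - G (\<eta> x)))"
proof -
  define A where "A x = G (\<eta> x - 1) - G (\<eta> x)" for x
  define B where "B y = G (\<eta> y + 1) - G (\<eta> y)" for y
  have off_diag: "(\<Sum>y\<in>{..<L} - {x}. F y) = (\<Sum>y<L. F y) - F x" if "x < L" for x and F :: "nat \<Rightarrow> real"
    using that by (simp add: sum_diff1)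
  have N: "(\<Sum>y<L. real (\<eta> y)) = real N" by (rule Omega_sum_real[OF \<eta>])
  have "gen L d (\<lambda>\<xi>. \<Sum>z<L. G (\<xi> z)) \<eta> =
      (\<Sum>x<L. \<Sum>y\<in>{..<L} - {x}. real (\<eta> x) * (d + real (\<eta> y)) * A x) +
      (\<Sum>x<L. \<Sum>y\<in>{..<L} - {x}. real (\<eta> x) * (d + real (\<eta> y)) * B y)"
    unfolding gen_def sum.distrib[symmetric]
    by (intro sum.cong refl) (simp add: sum_jump A_def B_def algebra_simps)
  also have "(\<Sum>x<L. \<Sum>y\<in>{..<L} - {x}. real (\<eta> x) * (d + real (\<eta> y)) * A x) =
      (\<Sum>x<L. real (\<eta> x) * (d * (real L - 1) + real N - real (\<eta> x)) * A x)"
    by (intro sum.cong refl)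
      (simp add: off_diag sum_distrib_left[symmetric] sum_distrib_right[symmetric] sum.distrib N algebra_simps)
  also have "(\<Sum>x<L. \<Sum>y\<in>{..<L} - {x}. real (\<eta> x) * (d + real (\<eta> y)) * B y) =
      (\<Sum>y<L. \<Sum>x\<in>{..<L} - {y}. real (\<eta> x) * (d + real (\<eta> y)) * B y)"
    using sum.swap_restrict[of "{..<L}" "{..<L}" "\<lambda>x y. real (\<eta> x) * (d + real (\<eta> y)) * B y" "\<lambda>x y. x \<noteq> y"]
    by (simp add: set_diff_eq conj_commute eq_commute[of "_::nat"])
  also have "\<dots> = (\<Sum>y<L. (d + real (\<eta> y)) * (real N - real (\<eta> y)) * B y)"
    by (intro sum.cong refl) (simp add: off_diag sum_distrib_right[symmetric] N)
  finally show ?thesis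
    by (simp add: A_def B_def sum.distrib)
qed

lemma sum_rates_le:
  assumes \<eta>: "\<eta> \<in> Omega L N" and "d \<ge> 0"
  shows "(\<Sum>x<L. \<Sum>y\<in>{..<L} - {x}. real (\<eta> x) * (d + real (\<eta> y))) \<le> real N * (d * real L + real N)"
proof -
  have "(\<Sum>x<L. \<Sum>y\<in>{..<L} - {x}. real (\<eta> x) * (d + real (\<eta> y))) \<le>
      (\<Sum>x<L. \<Sum>y<L. real (\<eta> x) * (d + real (\<eta> y)))"
    by (intro sum_mono sum_mono2) (use assms(2) in auto)
  also have "\<dots> = real N * (d * real L + real N)"
    by (simp add: sum_distrib_left[symmetric] sum_distrib_right[symmetric] sum.distrib Omega_sum_real[OF \<eta>])
  finally show ?thesis .
qed

lemma abs_mult_le: "\<bar>a\<bar> \<le> A \<Longrightarrow> \<bar>b\<bar> \<le> B \<Longrightarrow> \<bar>a * b :: real\<bar> \<le> A * B"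
  unfolding abs_mult by (rule mult_mono) auto

lemma jump_products_bound:
  assumes \<eta>: "\<eta> \<in> Omega L N" and "d \<ge> 0" and "N > 0"
    and f: "\<forall>x<L. \<forall>y<L. x \<noteq> y \<longrightarrow> 0 < \<eta> x \<longrightarrow> \<bar>f (jump \<eta> x y) - f \<eta>\<bar> \<le> C1 / real N"
    and g: "\<forall>x<L. \<forall>y<L. x \<noteq> y \<longrightarrow> 0 < \<eta> x \<longrightarrow> \<bar>g (jump \<eta> x y) - g \<eta>\<bar> \<le> C2 / real N"
  shows "\<bar>\<Sum>x<L. \<Sum>y\<in>{..<L} - {x}. real (\<eta> x) * (d + real (\<eta> y)) *
            ((f (jump \<eta> x y) - f \<eta>) * (g (jump \<eta> x y) - g \<eta>))\<bar>
         \<le> \<bar>C1 * C2\<bar> * (d * real L / real N + 1)"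
proof -
  define K where "K = \<bar>C1 * C2\<bar> / real N ^ 2"
  have summand_le: "\<bar>real (\<eta> x) * (d + real (\<eta> y)) * ((f (jump \<eta> x y) - f \<eta>) * (g (jump \<eta> x y) - g \<eta>))\<bar>
      \<le> real (\<eta> x) * (d + real (\<eta> y)) * K" if "x < L" "y < L" "x \<noteq> y" for x y
  proof (cases "\<eta> x = 0")
    case False
    with f g that have "\<bar>(f (jump \<eta> x y) - f \<eta>) * (g (jump \<eta> x y) - g \<eta>)\<bar> \<le> C1 / real N * (C2 / real N)"
      by (intro abs_mult_le) auto
    also have "\<dots> \<le> K" by (simp add: K_def power2_eq_square divide_right_mono)
    finally show ?thesis
      using \<open>d \<ge> 0\<close> by (simp add: abs_mult mult_left_mono)
  qed simp
  have "\<bar>\<Sum>x<L. \<Sum>y\<in>{..<L} - {x}. real (\<eta> x) * (d + real (\<eta> y)) *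
            ((f (jump \<eta> x y) - f \<eta>) * (g (jump \<eta> x y) - g \<eta>))\<bar>
      \<le> (\<Sum>x<L. \<Sum>y\<in>{..<L} - {x}. real (\<eta> x) * (d + real (\<eta> y)) * K)"
    by (rule sum_abs[THEN order_trans], rule sum_mono, rule sum_abs[THEN order_trans], rule sum_mono)
      (use summand_le in auto)
  also have "\<dots> = K * (\<Sum>x<L. \<Sum>y\<in>{..<L} - {x}. real (\<eta> x) * (d + real (\<eta> y)))"
    by (simp add: sum_distrib_left ac_simps)
  also have "\<dots> \<le> K * (real N * (d * real L + real N))"
    using sum_rates_le[OF \<eta> \<open>d \<ge> 0\<close>] by (intro mult_left_mono) (auto simp: K_def)
  also have "\<dots> = \<bar>C1 * C2\<bar> * (d * real L / real N + 1)"
    using \<open>N > 0\<close> by (simp add: K_def field_simps power2_eq_square)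
  finally show ?thesis .
qed

lemma gen_mult_error:
  assumes \<eta>: "\<eta> \<in> Omega L N" and "N > 0" "L > 0" "d > 0"
    and "\<bar>f \<eta>\<bar> \<le> B1" "\<bar>g \<eta>\<bar> \<le> B2"
    and "\<forall>x<L. \<forall>y<L. x \<noteq> y \<longrightarrow> 0 < \<eta> x \<longrightarrow> \<bar>f (jump \<eta> x y) - f \<eta>\<bar> \<le> C1 / real N"
    and "\<forall>x<L. \<forall>y<L. x \<noteq> y \<longrightarrow> 0 < \<eta> x \<longrightarrow> \<bar>g (jump \<eta> x y) - g \<eta>\<bar> \<le> C2 / real N"
  shows "\<bar>gen L d (\<lambda>\<xi>. f \<xi> * g \<xi>) \<eta> / (d * real L) - (\<psi>1 * g \<eta> + f \<eta> * \<psi>2)\<bar>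
    \<le> B1 * \<bar>gen L d g \<eta> / (d * real L) - \<psi>2\<bar> + B2 * \<bar>gen L d f \<eta> / (d * real L) - \<psi>1\<bar>
       + \<bar>C1 * C2\<bar> * (1 / real N + 1 / (d * real L))"
proof -
  define cross where "cross = (\<Sum>x<L. \<Sum>y\<in>{..<L} - {x}. real (\<eta> x) * (d + real (\<eta> y)) *
    ((f (jump \<eta> x y) - f \<eta>) * (g (jump \<eta> x y) - g \<eta>)))"
  have dL: "d * real L > 0" using assms(3,4) by simp
  have "gen L d (\<lambda>\<xi>. f \<xi> * g \<xi>) \<eta> / (d * real L) - (\<psi>1 * g \<eta> + f \<eta> * \<psi>2) =
      f \<eta> * (gen L d g \<eta> / (d * real L) - \<psi>2) + g \<eta> * (gen L d f \<eta> / (d * real L) - \<psi>1) + cross / (d * real L)"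
  proof -
    have "gen L d (\<lambda>\<xi>. f \<xi> * g \<xi>) \<eta> = f \<eta> * gen L d g \<eta> + g \<eta> * gen L d f \<eta> + cross"
      unfolding cross_def by (rule gen_mult)
    then show ?thesis using dL by (simp add: field_simps add_divide_distrib)
  qed
  also have "\<bar>\<dots>\<bar> \<le> B1 * \<bar>gen L d g \<eta> / (d * real L) - \<psi>2\<bar> + B2 * \<bar>gen L d f \<eta> / (d * real L) - \<psi>1\<bar>
       + \<bar>C1 * C2\<bar> * (d * real L / real N + 1) / (d * real L)"
  proof (intro abs_triangle_ineq[THEN order_trans] add_mono)
    show "\<bar>f \<eta> * (gen L d g \<eta> / (d * real L) - \<psi>2)\<bar> \<le> B1 * \<bar>gen L d g \<eta> / (d * real L) - \<psi>2\<bar>"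
      "\<bar>g \<eta> * (gen L d f \<eta> / (d * real L) - \<psi>1)\<bar> \<le> B2 * \<bar>gen L d f \<eta> / (d * real L) - \<psi>1\<bar>"
      using assms(5,6) by (auto intro: abs_mult_le)
    show "\<bar>cross / (d * real L)\<bar> \<le> \<bar>C1 * C2\<bar> * (d * real L / real N + 1) / (d * real L)"
      unfolding cross_def abs_divide abs_of_pos[OF dL] using dL assms(2,4,7,8)
      by (intro divide_right_mono jump_products_bound[OF \<eta>]) auto
  qed
  also have "\<bar>C1 * C2\<bar> * (d * real L / real N + 1) / (d * real L) = \<bar>C1 * C2\<bar> * (1 / real N + 1 / (d * real L))"
    using assms(2-4) by (simp add: field_simps)
  finally show ?thesis .
qed

section \<open>Approximate generators\<close>

type_synonym observable = "nat \<Rightarrow> nat \<Rightarrow> (nat \<Rightarrow> nat) \<Rightarrow> real"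

definition unif_vanishing :: "(nat \<times> nat) filter \<Rightarrow> observable \<Rightarrow> bool" where
  "unif_vanishing F E \<longleftrightarrow> (\<forall>\<epsilon>>0. \<forall>\<^sub>F (L, N) in F. \<forall>\<eta>\<in>Omega L N. \<bar>E L N \<eta>\<bar> \<le> \<epsilon>)"

definition unif_bounded :: "(nat \<times> nat) filter \<Rightarrow> observable \<Rightarrow> bool" where
  "unif_bounded F \<Phi> \<longleftrightarrow> (\<exists>B. \<forall>\<^sub>F (L, N) in F. \<forall>\<eta>\<in>Omega L N. \<bar>\<Phi> L N \<eta>\<bar> \<le> B)"

definition small_jumps :: "(nat \<times> nat) filter \<Rightarrow> observable \<Rightarrow> bool" where
  "small_jumps F \<Phi> \<longleftrightarrow> (\<exists>C. \<forall>\<^sub>F (L, N) in F. \<forall>\<eta>\<in>Omega L N. \<forall>x<L. \<forall>y<L. x \<noteq> y \<longrightarrow> 0 < \<eta> x \<longrightarrow>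
     \<bar>\<Phi> L N (jump \<eta> x y) - \<Phi> L N \<eta>\<bar> \<le> C / real N)"

text \<open>The jump bound on \<Phi> is what controls the carre du champ when two approximate generators
  are multiplied, see \<open>gen_mult_error\<close>.\<close>
definition approx_gen :: "(nat \<times> nat) filter \<Rightarrow> (nat \<Rightarrow> real) \<Rightarrow> observable \<Rightarrow> observable \<Rightarrow> bool" where
  "approx_gen F d \<Phi> \<Psi> \<longleftrightarrow> unif_bounded F \<Phi> \<and> small_jumps F \<Phi> \<and> unif_bounded F \<Psi> \<and>
     unif_vanishing F (\<lambda>L N \<eta>. gen L (d L) (\<Phi> L N) \<eta> / (d L * real L) - \<Psi> L N \<eta>)"

lemma unif_vanishing_le:
  assumes "(q \<longlongrightarrow> 0) F" and "\<forall>\<^sub>F (L, N) in F. \<forall>\<eta>\<in>Omega L N. \<bar>E L N \<eta>\<bar> \<le> q (L, N)"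
  shows "unif_vanishing F E"
  unfolding unif_vanishing_def
proof (intro allI impI)
  fix \<epsilon> :: real assume "\<epsilon> > 0"
  with assms(1) have "\<forall>\<^sub>F x in F. q x < \<epsilon>" by (rule order_tendstoD)
  with assms(2) show "\<forall>\<^sub>F (L, N) in F. \<forall>\<eta>\<in>Omega L N. \<bar>E L N \<eta>\<bar> \<le> \<epsilon>"
    by eventually_elim fastforce
qed

lemma unif_vanishing_add:
  assumes "unif_vanishing F E1" "unif_vanishing F E2"
  shows "unif_vanishing F (\<lambda>L N \<eta>. E1 L N \<eta> + E2 L N \<eta>)"
  unfolding unif_vanishing_def
proof (intro allI impI)
  fix \<epsilon> :: real assume "\<epsilon> > 0"
  then have "\<epsilon> / 2 > 0" by simp
  then have "\<forall>\<^sub>F (L, N) in F. \<forall>\<eta>\<in>Omega L N. \<bar>E1 L N \<eta>\<bar> \<le> \<epsilon> / 2"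
    "\<forall>\<^sub>F (L, N) in F. \<forall>\<eta>\<in>Omega L N. \<bar>E2 L N \<eta>\<bar> \<le> \<epsilon> / 2"
    using assms unfolding unif_vanishing_def by blast+
  then show "\<forall>\<^sub>F (L, N) in F. \<forall>\<eta>\<in>Omega L N. \<bar>E1 L N \<eta> + E2 L N \<eta>\<bar> \<le> \<epsilon>"
    by eventually_elim (fastforce intro: abs_triangle_ineq[THEN order_trans])
qed

lemma unif_vanishing_cmult:
  assumes "unif_vanishing F E"
  shows "unif_vanishing F (\<lambda>L N \<eta>. c * E L N \<eta>)"
  unfolding unif_vanishing_def
proof (intro allI impI)
  fix \<epsilon> :: real assume "\<epsilon> > 0"
  then have "\<forall>\<^sub>F (L, N) in F. \<forall>\<eta>\<in>Omega L N. \<bar>E L N \<eta>\<bar> \<le> \<epsilon> / (\<bar>c\<bar> + 1)"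
    using assms unfolding unif_vanishing_def by auto
  then show "\<forall>\<^sub>F (L, N) in F. \<forall>\<eta>\<in>Omega L N. \<bar>c * E L N \<eta>\<bar> \<le> \<epsilon>"
  proof eventually_elim
    case (elim LN)
    have "\<bar>c * e\<bar> \<le> \<epsilon>" if "\<bar>e\<bar> \<le> \<epsilon> / (\<bar>c\<bar> + 1)" for e :: real
    proof -
      have "\<bar>c * e\<bar> \<le> (\<bar>c\<bar> + 1) * \<bar>e\<bar>" by (simp add: abs_mult mult_right_mono)
      also have "\<dots> \<le> \<epsilon>" using that by (simp add: field_simps)
      finally show ?thesis .
    qed
    with elim show ?case by (auto simp: case_prod_beta)
  qed
qed

lemma unif_vanishing_abs: "unif_vanishing F E \<Longrightarrow> unif_vanishing F (\<lambda>L N \<eta>. \<bar>E L N \<eta>\<bar>)"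
  unfolding unif_vanishing_def by simp

lemma unif_vanishing_dominated:
  assumes "unif_vanishing F E'" and "(q \<longlongrightarrow> 0) F"
    and "\<forall>\<^sub>F (L, N) in F. \<forall>\<eta>\<in>Omega L N. \<bar>E L N \<eta>\<bar> \<le> E' L N \<eta> + q (L, N)"
  shows "unif_vanishing F E"
  unfolding unif_vanishing_def
proof (intro allI impI)
  fix \<epsilon> :: real assume "\<epsilon> > 0"
  then have "\<epsilon> / 2 > 0" by simp
  then have "\<forall>\<^sub>F (L, N) in F. \<forall>\<eta>\<in>Omega L N. \<bar>E' L N \<eta>\<bar> \<le> \<epsilon> / 2" "\<forall>\<^sub>F x in F. q x < \<epsilon> / 2"
    using assms(1) order_tendstoD(2)[OF assms(2)] unfolding unif_vanishing_def by blast+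
  with assms(3) show "\<forall>\<^sub>F (L, N) in F. \<forall>\<eta>\<in>Omega L N. \<bar>E L N \<eta>\<bar> \<le> \<epsilon>"
    by eventually_elim fastforce
qed

lemma unif_bounded_add:
  assumes "unif_bounded F \<Phi>" "unif_bounded F \<Psi>"
  shows "unif_bounded F (\<lambda>L N \<eta>. \<Phi> L N \<eta> + \<Psi> L N \<eta>)"
proof -
  from assms obtain B1 B2 where "\<forall>\<^sub>F (L, N) in F. \<forall>\<eta>\<in>Omega L N. \<bar>\<Phi> L N \<eta>\<bar> \<le> B1"
    "\<forall>\<^sub>F (L, N) in F. \<forall>\<eta>\<in>Omega L N. \<bar>\<Psi> L N \<eta>\<bar> \<le> B2"
    unfolding unif_bounded_def by blast
  then have "\<forall>\<^sub>F (L, N) in F. \<forall>\<eta>\<in>Omega L N. \<bar>\<Phi> L N \<eta> + \<Psi> L N \<eta>\<bar> \<le> B1 + B2"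
    by eventually_elim (fastforce intro: abs_triangle_ineq[THEN order_trans])
  then show ?thesis unfolding unif_bounded_def by blast
qed

lemma unif_bounded_mult:
  assumes "unif_bounded F \<Phi>" "unif_bounded F \<Psi>"
  shows "unif_bounded F (\<lambda>L N \<eta>. \<Phi> L N \<eta> * \<Psi> L N \<eta>)"
proof -
  from assms obtain B1 B2 where "\<forall>\<^sub>F (L, N) in F. \<forall>\<eta>\<in>Omega L N. \<bar>\<Phi> L N \<eta>\<bar> \<le> B1"
    "\<forall>\<^sub>F (L, N) in F. \<forall>\<eta>\<in>Omega L N. \<bar>\<Psi> L N \<eta>\<bar> \<le> B2"
    unfolding unif_bounded_def by blast
  then have "\<forall>\<^sub>F (L, N) in F. \<forall>\<eta>\<in>Omega L N. \<bar>\<Phi> L N \<eta> * \<Psi> L N \<eta>\<bar> \<le> B1 * B2"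
    by eventually_elim (auto intro: abs_mult_le)
  then show ?thesis unfolding unif_bounded_def by blast
qed

lemma small_jumps_mult:
  assumes "unif_bounded F \<Phi>1" "unif_bounded F \<Phi>2" "small_jumps F \<Phi>1" "small_jumps F \<Phi>2"
  shows "small_jumps F (\<lambda>L N \<xi>. \<Phi>1 L N \<xi> * \<Phi>2 L N \<xi>)"
proof -
  from assms obtain B1 B2 C1 C2 where
    "\<forall>\<^sub>F (L, N) in F. \<forall>\<eta>\<in>Omega L N. \<bar>\<Phi>1 L N \<eta>\<bar> \<le> B1"
    "\<forall>\<^sub>F (L, N) in F. \<forall>\<eta>\<in>Omega L N. \<bar>\<Phi>2 L N \<eta>\<bar> \<le> B2"
    "\<forall>\<^sub>F (L, N) in F. \<forall>\<eta>\<in>Omega L N. \<forall>x<L. \<forall>y<L. x \<noteq> y \<longrightarrow> 0 < \<eta> x \<longrightarrow>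
       \<bar>\<Phi>1 L N (jump \<eta> x y) - \<Phi>1 L N \<eta>\<bar> \<le> C1 / real N"
    "\<forall>\<^sub>F (L, N) in F. \<forall>\<eta>\<in>Omega L N. \<forall>x<L. \<forall>y<L. x \<noteq> y \<longrightarrow> 0 < \<eta> x \<longrightarrow>
       \<bar>\<Phi>2 L N (jump \<eta> x y) - \<Phi>2 L N \<eta>\<bar> \<le> C2 / real N"
    unfolding unif_bounded_def small_jumps_def by blast
  then have "\<forall>\<^sub>F (L, N) in F. \<forall>\<eta>\<in>Omega L N. \<forall>x<L. \<forall>y<L. x \<noteq> y \<longrightarrow> 0 < \<eta> x \<longrightarrow>
      \<bar>\<Phi>1 L N (jump \<eta> x y) * \<Phi>2 L N (jump \<eta> x y) - \<Phi>1 L N \<eta> * \<Phi>2 L N \<eta>\<bar> \<le> (C1 * B2 + B1 * C2) / real N"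
  proof eventually_elim
    case (elim LN)
    obtain L N where LN: "LN = (L, N)" by fastforce
    show ?case unfolding LN case_prod_conv
    proof (intro ballI allI impI)
      fix \<eta> x y assume \<eta>: "\<eta> \<in> Omega L N" and xy: "x < L" "y < L" "x \<noteq> y" "0 < \<eta> x"
      let ?a1 = "\<Phi>1 L N (jump \<eta> x y)" and ?b1 = "\<Phi>1 L N \<eta>"
      let ?a2 = "\<Phi>2 L N (jump \<eta> x y)" and ?b2 = "\<Phi>2 L N \<eta>"
      have "jump \<eta> x y \<in> Omega L N" using jump_Omega[OF \<eta> xy] .
      with elim \<eta> xy have "\<bar>?a1 - ?b1\<bar> \<le> C1 / real N" "\<bar>?a2\<bar> \<le> B2" "\<bar>?b1\<bar> \<le> B1" "\<bar>?a2 - ?b2\<bar> \<le> C2 / real N"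
        unfolding LN by auto
      then have "\<bar>(?a1 - ?b1) * ?a2 + ?b1 * (?a2 - ?b2)\<bar> \<le> C1 / real N * B2 + B1 * (C2 / real N)"
        by (intro abs_triangle_ineq[THEN order_trans] add_mono abs_mult_le)
      then show "\<bar>?a1 * ?a2 - ?b1 * ?b2\<bar> \<le> (C1 * B2 + B1 * C2) / real N"
        by (simp add: algebra_simps add_divide_distrib)
    qed
  qed
  then show ?thesis unfolding small_jumps_def by blast
qed

context inclusion_scaling
begin

lemma approx_gen_mult:
  assumes "approx_gen (ratio_limit \<rho>) d \<Phi>1 \<Psi>1" "approx_gen (ratio_limit \<rho>) d \<Phi>2 \<Psi>2"
  shows "approx_gen (ratio_limit \<rho>) d (\<lambda>L N \<xi>. \<Phi>1 L N \<xi> * \<Phi>2 L N \<xi>)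
           (\<lambda>L N \<eta>. \<Psi>1 L N \<eta> * \<Phi>2 L N \<eta> + \<Phi>1 L N \<eta> * \<Psi>2 L N \<eta>)"
proof -
  let ?F = "ratio_limit \<rho>"
  define E1 where "E1 L N \<eta> = gen L (d L) (\<Phi>1 L N) \<eta> / (d L * real L) - \<Psi>1 L N \<eta>" for L N \<eta>
  define E2 where "E2 L N \<eta> = gen L (d L) (\<Phi>2 L N) \<eta> / (d L * real L) - \<Psi>2 L N \<eta>" for L N \<eta>
  from assms obtain B1 B2 C1 C2 where
    B1: "\<forall>\<^sub>F (L, N) in ?F. \<forall>\<eta>\<in>Omega L N. \<bar>\<Phi>1 L N \<eta>\<bar> \<le> B1" and
    B2: "\<forall>\<^sub>F (L, N) in ?F. \<forall>\<eta>\<in>Omega L N. \<bar>\<Phi>2 L N \<eta>\<bar> \<le> B2" and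
    C1: "\<forall>\<^sub>F (L, N) in ?F. \<forall>\<eta>\<in>Omega L N. \<forall>x<L. \<forall>y<L. x \<noteq> y \<longrightarrow> 0 < \<eta> x \<longrightarrow>
       \<bar>\<Phi>1 L N (jump \<eta> x y) - \<Phi>1 L N \<eta>\<bar> \<le> C1 / real N" and
    C2: "\<forall>\<^sub>F (L, N) in ?F. \<forall>\<eta>\<in>Omega L N. \<forall>x<L. \<forall>y<L. x \<noteq> y \<longrightarrow> 0 < \<eta> x \<longrightarrow>
       \<bar>\<Phi>2 L N (jump \<eta> x y) - \<Phi>2 L N \<eta>\<bar> \<le> C2 / real N"
    unfolding approx_gen_def unif_bounded_def small_jumps_def by blast
  have E: "unif_vanishing ?F E1" "unif_vanishing ?F E2"
    using assms unfolding approx_gen_def E1_def E2_def by blast+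
  have "unif_vanishing ?F (\<lambda>L N \<eta>. gen L (d L) (\<lambda>\<xi>. \<Phi>1 L N \<xi> * \<Phi>2 L N \<xi>) \<eta> / (d L * real L)
          - (\<Psi>1 L N \<eta> * \<Phi>2 L N \<eta> + \<Phi>1 L N \<eta> * \<Psi>2 L N \<eta>))"
  proof (rule unif_vanishing_dominated)
    show "unif_vanishing ?F (\<lambda>L N \<eta>. B1 * \<bar>E2 L N \<eta>\<bar> + B2 * \<bar>E1 L N \<eta>\<bar>)"
      using E by (intro unif_vanishing_add unif_vanishing_cmult unif_vanishing_abs)
    show "((\<lambda>(L, N). \<bar>C1 * C2\<bar> * (1 / real N + 1 / (d L * real L))) \<longlongrightarrow> 0) ?F"
      using tendsto_mult_right_zero[OF tendsto_add_zero[OF tendsto_inverse_N tendsto_inverse_dL], of "\<bar>C1 * C2\<bar>"]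
      by (simp add: case_prod_beta')
    show "\<forall>\<^sub>F (L, N) in ?F. \<forall>\<eta>\<in>Omega L N.
        \<bar>gen L (d L) (\<lambda>\<xi>. \<Phi>1 L N \<xi> * \<Phi>2 L N \<xi>) \<eta> / (d L * real L) - (\<Psi>1 L N \<eta> * \<Phi>2 L N \<eta> + \<Phi>1 L N \<eta> * \<Psi>2 L N \<eta>)\<bar>
        \<le> B1 * \<bar>E2 L N \<eta>\<bar> + B2 * \<bar>E1 L N \<eta>\<bar> + (case (L, N) of (L, N) \<Rightarrow> \<bar>C1 * C2\<bar> * (1 / real N + 1 / (d L * real L)))"
      using eventually_sizes_pos B1 B2 C1 C2
    proof eventually_elim
      case (elim LN)
      obtain L N where LN: "LN = (L, N)" by fastforce
      show ?case unfolding LN case_prod_conv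
      proof
        fix \<eta> assume \<eta>: "\<eta> \<in> Omega L N"
        with elim show "\<bar>gen L (d L) (\<lambda>\<xi>. \<Phi>1 L N \<xi> * \<Phi>2 L N \<xi>) \<eta> / (d L * real L)
            - (\<Psi>1 L N \<eta> * \<Phi>2 L N \<eta> + \<Phi>1 L N \<eta> * \<Psi>2 L N \<eta>)\<bar>
          \<le> B1 * \<bar>E2 L N \<eta>\<bar> + B2 * \<bar>E1 L N \<eta>\<bar> + \<bar>C1 * C2\<bar> * (1 / real N + 1 / (d L * real L))"
          unfolding LN E1_def E2_def by (auto intro!: gen_mult_error)
      qed
    qed
  qed
  moreover have "unif_bounded ?F (\<lambda>L N \<eta>. \<Psi>1 L N \<eta> * \<Phi>2 L N \<eta> + \<Phi>1 L N \<eta> * \<Psi>2 L N \<eta>)"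
    using assms unfolding approx_gen_def by (intro unif_bounded_add unif_bounded_mult) auto
  ultimately show ?thesis
    using assms unfolding approx_gen_def by (auto intro: unif_bounded_mult small_jumps_mult)
qed

end

section \<open>Empirical pairings and constant profiles\<close>

lemma at_within_nonneg_eq_at: "(x::real) > 0 \<Longrightarrow> at x within {0..} = at x"
  by (rule at_within_open_subset[of _ "{0<..}"]) auto

lemma D1_eqI:
  assumes "r > 0" "(g has_real_derivative D) (at r)"
  shows "D1 g r = D"
  unfolding D1_def using assms
  by (intro some_equality) (auto simp: at_within_nonneg_eq_at intro: DERIV_unique)

lemma D1_D1_eqI:
  assumes "r > 0" "(g has_real_derivative D) (at r)" "\<And>s. s > 0 \<Longrightarrow> D1 f s = g s"
  shows "D1 (D1 f) r = D"
proof (rule D1_eqI[OF \<open>r > 0\<close>])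
  show "(D1 f has_real_derivative D) (at r)"
    by (rule has_field_derivative_transform_within_open[OF assms(2), of "{0<..}"]) (use assms in auto)
qed

lemma Ahat_const: "r > 0 \<Longrightarrow> Ahat (\<lambda>_. c) (ennreal r) = 0"
  using D1_eqI[of r "\<lambda>_. c" 0] D1_D1_eqI[of r "\<lambda>_. 0" 0 "\<lambda>_. c"] D1_eqI[of _ "\<lambda>_. c" 0]
  by (simp add: Ahat_def hr_def[abs_def] Let_def)

lemma emp_const: "\<xi> \<in> Omega L N \<Longrightarrow> N > 0 \<Longrightarrow> emp L N d \<xi> (\<lambda>_. c) = c"
  unfolding emp_def using Omega_sum_real[of \<xi> L N]
  by (simp add: sum_distrib_right[symmetric] sum_divide_distrib[symmetric])

lemma emp_abs_le:
  assumes "\<xi> \<in> Omega L N" "N > 0"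
    and "\<And>x. x < L \<Longrightarrow> 0 < \<xi> x \<Longrightarrow> \<bar>h (ennreal (d * real L * real (\<xi> x) / real N))\<bar> \<le> B"
  shows "\<bar>emp L N d \<xi> h\<bar> \<le> B"
proof -
  have "\<bar>emp L N d \<xi> h\<bar> \<le> (\<Sum>x<L. real (\<xi> x) / real N * B)"
    unfolding emp_def
  proof (rule sum_abs[THEN order_trans], rule sum_mono)
    fix x assume "x \<in> {..<L}"
    then show "\<bar>real (\<xi> x) / real N * h (ennreal (d * real L * real (\<xi> x) / real N))\<bar> \<le> real (\<xi> x) / real N * B"
      using assms(3)[of x] by (cases "\<xi> x = 0") (auto simp: abs_mult intro!: divide_right_mono mult_left_mono)
  qed
  also have "\<dots> = B"
    using Omega_sum_real[OF assms(1)] assms(2) by (simp add: sum_distrib_right[symmetric] sum_divide_distrib[symmetric])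
  finally show ?thesis .
qed

lemma emp_Ahat_const:
  assumes "N > 0" "L > 0" "d > 0"
  shows "emp L N d \<eta> (Ahat (\<lambda>_. c)) = 0"
  unfolding emp_def
proof (rule sum.neutral, rule ballI)
  fix x
  show "real (\<eta> x) / real N * Ahat (\<lambda>_. c) (ennreal (d * real L * real (\<eta> x) / real N)) = 0"
    using assms by (cases "\<eta> x = 0") (simp_all add: Ahat_const)
qed

lemma gen_emp_const:
  assumes "\<eta> \<in> Omega L N" "N > 0"
  shows "gen L d (\<lambda>\<xi>. emp L N d' \<xi> (\<lambda>_. c)) \<eta> = 0"
  unfolding gen_def using assms
  by (intro sum.neutral ballI) (auto simp: emp_const jump_Omega)

section \<open>Profiles of class C3 with compact support\<close>

lemma deriv_zero_beyond:
  assumes "\<And>x. x > R \<Longrightarrow> g x = 0" "R \<ge> 0"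
    and "\<And>x. x \<ge> 0 \<Longrightarrow> (g has_real_derivative g' x) (at x within {0..})" "x > R"
  shows "g' x = 0"
proof -
  have "x > 0" using assms(2,4) by linarith
  then have "(g has_real_derivative g' x) (at x)"
    using assms(3)[of x] at_within_nonneg_eq_at[of x] by simp
  moreover have "((\<lambda>_. 0) has_real_derivative 0) (at x)" by simp
  then have "(g has_real_derivative 0) (at x)"
    by (rule has_field_derivative_transform_within_open[of _ _ _ "{R<..}"]) (use assms in auto)
  ultimately show ?thesis by (rule DERIV_unique)
qed

lemma bounded_if_zero_beyond:
  fixes g :: "real \<Rightarrow> real"
  assumes "continuous_on {0..} g" "\<And>x. x > R \<Longrightarrow> g x = 0"
  obtains M where "\<And>x. x \<ge> 0 \<Longrightarrow> \<bar>g x\<bar> \<le> M"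
proof -
  have "compact (g ` {0..R})"
    by (rule compact_continuous_image[OF continuous_on_subset[OF assms(1)]]) auto
  then obtain M where M: "\<forall>y\<in>g ` {0..R}. \<bar>y\<bar> \<le> M"
    by (auto dest!: compact_imp_bounded simp: bounded_iff)
  have "\<bar>g x\<bar> \<le> max M 0" if "x \<ge> 0" for x
  proof (cases "x \<le> R")
    case True
    with M that have "\<bar>g x\<bar> \<le> M" by auto
    then show ?thesis by simp
  qed (use assms(2) in auto)
  then show ?thesis by (rule that)
qed

locale C3c_profile =
  fixes f f' f'' f''' :: "real \<Rightarrow> real" and R M :: real
  assumes R_nonneg: "R \<ge> 0"
    and deriv1: "\<And>x. x \<ge> 0 \<Longrightarrow> (f has_real_derivative f' x) (at x within {0..})"
    and deriv2: "\<And>x. x \<ge> 0 \<Longrightarrow> (f' has_real_derivative f'' x) (at x within {0..})"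
    and deriv3: "\<And>x. x \<ge> 0 \<Longrightarrow> (f'' has_real_derivative f''' x) (at x within {0..})"
    and support: "\<And>x. x > R \<Longrightarrow> f x = 0"
    and bounded: "\<And>x. x \<ge> 0 \<Longrightarrow> \<bar>f x\<bar> \<le> M \<and> \<bar>f' x\<bar> \<le> M \<and> \<bar>f'' x\<bar> \<le> M \<and> \<bar>f''' x\<bar> \<le> M"

lemma C3c_profile_exists:
  assumes "C3c_Rplus f"
  obtains f' f'' f''' R M where "C3c_profile f f' f'' f''' R M"
proof -
  from assms obtain f' f'' f''' R0 where
    d: "\<And>x. x \<ge> 0 \<Longrightarrow> (f has_real_derivative f' x) (at x within {0..})"
       "\<And>x. x \<ge> 0 \<Longrightarrow> (f' has_real_derivative f'' x) (at x within {0..})"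
       "\<And>x. x \<ge> 0 \<Longrightarrow> (f'' has_real_derivative f''' x) (at x within {0..})"
    and c: "continuous_on {0..} f'''" and s: "\<And>x. x \<ge> R0 \<Longrightarrow> f x = 0"
    unfolding C3c_Rplus_def by blast
  define R where "R = max R0 0"
  have R: "R \<ge> 0" and s0: "\<And>x. x > R \<Longrightarrow> f x = 0" using s by (auto simp: R_def)
  have s1: "\<And>x. x > R \<Longrightarrow> f' x = 0" using deriv_zero_beyond[OF s0 R d(1)] by auto
  have s2: "\<And>x. x > R \<Longrightarrow> f'' x = 0" using deriv_zero_beyond[OF s1 R d(2)] by auto
  have s3: "\<And>x. x > R \<Longrightarrow> f''' x = 0" using deriv_zero_beyond[OF s2 R d(3)] by auto
  have cont: "continuous_on {0..} f" "continuous_on {0..} f'" "continuous_on {0..} f''"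
    using d by (auto intro!: DERIV_continuous_on)
  obtain M0 M1 M2 M3 where "\<And>x. x \<ge> 0 \<Longrightarrow> \<bar>f x\<bar> \<le> M0" "\<And>x. x \<ge> 0 \<Longrightarrow> \<bar>f' x\<bar> \<le> M1"
      "\<And>x. x \<ge> 0 \<Longrightarrow> \<bar>f'' x\<bar> \<le> M2" "\<And>x. x \<ge> 0 \<Longrightarrow> \<bar>f''' x\<bar> \<le> M3"
    using bounded_if_zero_beyond[OF cont(1) s0] bounded_if_zero_beyond[OF cont(2) s1]
      bounded_if_zero_beyond[OF cont(3) s2] bounded_if_zero_beyond[OF c s3] by metis
  then have "C3c_profile f f' f'' f''' R (max (max M0 M1) (max M2 M3))"
    using R d s0 by unfold_locales (auto simp: le_max_iff_disj)
  then show ?thesis by (rule that)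
qed

lemma weight_by_support:
  fixes x y e B R :: real
  assumes "x \<ge> 0" "y \<ge> 0" "R \<ge> 0" "min x y > R \<Longrightarrow> e = 0" "\<bar>e\<bar> \<le> B"
  shows "max x y * \<bar>e\<bar> \<le> (R + \<bar>y - x\<bar>) * B"
proof (cases "min x y > R")
  case False
  then have "max x y \<le> R + \<bar>y - x\<bar>" by auto
  with assms show ?thesis by (intro mult_mono) auto
qed (use assms in auto)

text \<open>The left side is the contribution of a site holding \<open>k\<close> particles to the generator, with
  \<open>a / n\<close> and \<open>b / n\<close> the changes of the one-site profile when the site loses or gains a particle,
  minus the share \<open>d l (k/n) (A-hat h)\<close> of that site; the right side groups the difference into the four
  error terms estimated in \<open>site_error\<close>.\<close>
lemma site_decomposition:
  fixes n l d u k a b z A0 A1 A2 B :: real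
  assumes "n > 0" "l > 0" "d > 0" "u * n = d * l"
  shows "k * (d * (l - 1) + n - k) * (a / n) + (d + k) * (n - k) * (b / n)
           - (d * l * (k / n) * (z * A2 + (2 - z) * A1 - A0) + d * B)
       = d * l * ((k / n) * ((1 - k / n) * (a + b) / u - (z * A2 + 2 * A1))
           + (k / n) * (((l - 1) / l) * a + A0 + z * A1) - (k / n) * b / l + (b - B) / l)"
proof -
  have "u = d * l / n" using assms(1,4) by (simp add: field_simps)
  then show ?thesis using assms(1-3) by (simp add: field_simps)
qed

context C3c_profile
begin

lemma M_nonneg: "M \<ge> 0"
  using bounded[of 0] by auto

lemma vanish_beyond: "x > R \<Longrightarrow> f x = 0 \<and> f' x = 0 \<and> f'' x = 0"
  using support deriv_zero_beyond[OF deriv_zero_beyond[OF support R_nonneg deriv1] R_nonneg deriv2]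
    deriv_zero_beyond[OF support R_nonneg deriv1] by blast

lemma taylor_bounds:
  assumes "x \<ge> 0" "y \<ge> 0"
  shows "\<bar>f y - f x\<bar> \<le> M * \<bar>y - x\<bar>"
    and "\<bar>f y - f x - f' x * (y - x)\<bar> \<le> M * (y - x)\<^sup>2"
    and "\<bar>f y - f x - f' x * (y - x) - f'' x / 2 * (y - x)\<^sup>2\<bar> \<le> M * \<bar>y - x\<bar> ^ 3"
proof -
  define D where "D = (!) [f, f', f'', f''']"
  have D: "(D i has_field_derivative D (Suc i) s) (at s within {0..})" if "i \<le> 2" "s \<in> {0..}" for i s
    using that deriv1 deriv2 deriv3 by (auto simp: D_def le_Suc_eq numeral_2_eq_2)
  have B: "norm (D (Suc i) s) \<le> M" if "i \<le> 2" "s \<in> {0..}" for i s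
    using that bounded[of s] by (auto simp: D_def le_Suc_eq numeral_2_eq_2)
  have taylor: "norm (D 0 y - (\<Sum>i\<le>n. D i x * (y - x) ^ i / fact i)) \<le> M * norm (y - x) ^ Suc n / fact n"
    if "n \<le> 2" for n
    by (rule field_Taylor[of "{0..}" n D M]) (use assms that D B in \<open>auto intro: order_trans\<close>)
  show "\<bar>f y - f x\<bar> \<le> M * \<bar>y - x\<bar>"
    using taylor[of 0] by (simp add: D_def)
  show "\<bar>f y - f x - f' x * (y - x)\<bar> \<le> M * (y - x)\<^sup>2"
    using taylor[of 1] by (simp add: D_def power2_eq_square)
  have "(\<Sum>i\<le>2. D i x * (y - x) ^ i / fact i) = f x + f' x * (y - x) + f'' x / 2 * (y - x)\<^sup>2"
    by (simp add: D_def numeral_2_eq_2)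
  moreover have "D 0 = f" by (simp add: D_def)
  ultimately have "\<bar>f y - f x - f' x * (y - x) - f'' x / 2 * (y - x)\<^sup>2\<bar> \<le> M * \<bar>y - x\<bar> ^ 3 / 2"
    using taylor[of 2] by (simp add: diff_diff_eq)
  also have "\<dots> \<le> M * \<bar>y - x\<bar> ^ 3"
    using M_nonneg by simp
  finally show "\<bar>f y - f x - f' x * (y - x) - f'' x / 2 * (y - x)\<^sup>2\<bar> \<le> M * \<bar>y - x\<bar> ^ 3" .
qed

lemma scaled_increment_bounds:
  assumes "u > 0" "k \<ge> 0" "z = u * k"
  shows "k * \<bar>f (z + u) - f z\<bar> \<le> (R + u) * M"
    and "k \<ge> 1 \<Longrightarrow> k * \<bar>f (z - u) - f z\<bar> \<le> (R + u) * M"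
proof -
  have z: "z \<ge> 0" using assms by simp
  have "max z (z + u) * \<bar>f (z + u) - f z\<bar> \<le> (R + \<bar>z + u - z\<bar>) * (M * \<bar>z + u - z\<bar>)"
    using z assms(1) by (intro weight_by_support R_nonneg taylor_bounds(1)) (auto simp: vanish_beyond)
  then have "(z + u) * \<bar>f (z + u) - f z\<bar> \<le> u * ((R + u) * M)"
    using assms(1) by (simp add: max_def mult_ac)
  moreover have "u * (k * \<bar>f (z + u) - f z\<bar>) \<le> (z + u) * \<bar>f (z + u) - f z\<bar>"
    unfolding assms(3) mult.assoc[symmetric] using assms(1) by (intro mult_right_mono) auto
  ultimately have "u * (k * \<bar>f (z + u) - f z\<bar>) \<le> u * ((R + u) * M)"
    by linarith
  then show "k * \<bar>f (z + u) - f z\<bar> \<le> (R + u) * M"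
    using assms(1) by simp
  assume "k \<ge> 1"
  then have z': "z - u \<ge> 0" using assms by (simp add: algebra_simps)
  have "max z (z - u) * \<bar>f (z - u) - f z\<bar> \<le> (R + \<bar>z - u - z\<bar>) * (M * \<bar>z - u - z\<bar>)"
    using z z' assms(1) by (intro weight_by_support R_nonneg taylor_bounds(1)) (auto simp: vanish_beyond)
  then have "u * (k * \<bar>f (z - u) - f z\<bar>) \<le> u * ((R + u) * M)"
    using assms by (simp add: max_def mult_ac)
  then show "k * \<bar>f (z - u) - f z\<bar> \<le> (R + u) * M"
    using assms(1) by simp
qed

lemma up_difference_bound:
  assumes "u > 0" "k \<ge> 0" "z = u * k"
  shows "\<bar>(k + 1) * f (z + u) - k * f z\<bar> \<le> (1 + R + u) * M"
proof -
  have "(k + 1) * f (z + u) - k * f z = f (z + u) + k * (f (z + u) - f z)"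
    by (simp add: algebra_simps)
  also have "\<bar>\<dots>\<bar> \<le> M + (R + u) * M"
    using assms bounded[of "z + u"] scaled_increment_bounds(1)[OF assms]
    by (intro abs_triangle_ineq[THEN order_trans] add_mono) (auto simp: abs_mult)
  finally show ?thesis by (simp add: algebra_simps)
qed

lemma down_difference_bound:
  assumes "u > 0" "k \<ge> 1" "z = u * k"
  shows "\<bar>(k - 1) * f (z - u) - k * f z\<bar> \<le> (1 + R + u) * M"
proof -
  have "z - u \<ge> 0" using assms by (simp add: algebra_simps)
  have "(k - 1) * f (z - u) - k * f z = k * (f (z - u) - f z) - f (z - u)"
    by (simp add: algebra_simps)
  also have "\<bar>\<dots>\<bar> \<le> (R + u) * M + M"
    using assms \<open>z - u \<ge> 0\<close> bounded[of "z - u"] scaled_increment_bounds(2)[OF assms(1) _ assms(3)]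
    by (intro abs_triangle_ineq4[THEN order_trans] add_mono) (auto simp: abs_mult)
  finally show ?thesis by (simp add: algebra_simps)
qed

lemma down_difference_expansion:
  assumes "u > 0" "k \<ge> 1" "z = u * k"
  shows "\<bar>(k - 1) * f (z - u) - k * f z + f z + z * f' z\<bar> \<le> (R + u + 1) * M * u"
proof -
  have z: "z \<ge> 0" "z - u \<ge> 0" using assms by (simp_all add: algebra_simps)
  let ?e = "f (z - u) - f z - f' z * (z - u - z)"
  have "max z (z - u) * \<bar>?e\<bar> \<le> (R + \<bar>z - u - z\<bar>) * (M * (z - u - z)\<^sup>2)"
    using z by (intro weight_by_support R_nonneg taylor_bounds(2)) (auto simp: vanish_beyond)
  then have "u * (k * \<bar>?e\<bar>) \<le> u * ((R + u) * M * u)"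
    using assms(1) by (simp add: assms(3) max_def power2_eq_square mult_ac)
  then have "k * \<bar>?e\<bar> \<le> (R + u) * M * u"
    using assms(1) by simp
  moreover have "\<bar>f z - f (z - u)\<bar> \<le> M * u"
    using taylor_bounds(1)[OF z(2,1)] assms(1) by simp
  moreover have "\<bar>k * ?e + (f z - f (z - u))\<bar> \<le> k * \<bar>?e\<bar> + \<bar>f z - f (z - u)\<bar>"
    using assms(2) abs_triangle_ineq[of "k * ?e"] by (simp add: abs_mult)
  moreover have "(k - 1) * f (z - u) - k * f z + f z + z * f' z = k * ?e + (f z - f (z - u))"
    by (simp add: assms(3) algebra_simps)
  ultimately show ?thesis
    by (simp only: distrib_right distrib_left)
qed

lemma second_difference_expansion:
  assumes "u > 0" "k \<ge> 1" "z = u * k"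
  shows "\<bar>(((k - 1) * f (z - u) - k * f z) + ((k + 1) * f (z + u) - k * f z)) / u
           - (z * f'' z + 2 * f' z)\<bar> \<le> 2 * (R + u) * M * u"
proof -
  have z: "z \<ge> 0" "z - u \<ge> 0" using assms by (simp_all add: algebra_simps)
  define ep where "ep = f (z + u) - f z - f' z * (z + u - z) - f'' z / 2 * (z + u - z)\<^sup>2"
  define em where "em = f (z - u) - f z - f' z * (z - u - z) - f'' z / 2 * (z - u - z)\<^sup>2"
  have "max z (z + u) * \<bar>ep\<bar> \<le> (R + \<bar>z + u - z\<bar>) * (M * \<bar>z + u - z\<bar> ^ 3)"
    unfolding ep_def using z assms(1)
    by (intro weight_by_support R_nonneg taylor_bounds(3)) (auto simp: vanish_beyond)
  then have "u * ((k + 1) * \<bar>ep\<bar>) \<le> u * ((R + u) * M * u * u)"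
    using assms(1) by (simp add: assms(3) max_def power3_eq_cube algebra_simps)
  then have ep_le: "(k + 1) * \<bar>ep\<bar> \<le> (R + u) * M * u * u"
    using assms(1) by simp
  have "max z (z - u) * \<bar>em\<bar> \<le> (R + \<bar>z - u - z\<bar>) * (M * \<bar>z - u - z\<bar> ^ 3)"
    unfolding em_def using z
    by (intro weight_by_support R_nonneg taylor_bounds(3)) (auto simp: vanish_beyond)
  then have "u * (k * \<bar>em\<bar>) \<le> u * ((R + u) * M * u * u)"
    using assms(1) by (simp add: assms(3) max_def power3_eq_cube mult_ac)
  then have "k * \<bar>em\<bar> \<le> (R + u) * M * u * u"
    using assms(1) by simp
  moreover have "(k - 1) * \<bar>em\<bar> \<le> k * \<bar>em\<bar>"
    by (simp add: mult_right_mono)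
  ultimately have em_le: "(k - 1) * \<bar>em\<bar> \<le> (R + u) * M * u * u"
    by linarith
  have "((k - 1) * f (z - u) - k * f z) + ((k + 1) * f (z + u) - k * f z)
      = u * (z * f'' z + 2 * f' z) + ((k + 1) * ep + (k - 1) * em)"
    by (simp add: ep_def em_def assms(3) power2_eq_square field_simps)
  then have "(((k - 1) * f (z - u) - k * f z) + ((k + 1) * f (z + u) - k * f z)) / u - (z * f'' z + 2 * f' z)
      = ((k + 1) * ep + (k - 1) * em) / u"
    using assms(1) by (simp add: field_simps)
  also have "\<bar>\<dots>\<bar> \<le> 2 * (R + u) * M * u"
  proof -
    have "\<bar>(k + 1) * ep + (k - 1) * em\<bar> \<le> (k + 1) * \<bar>ep\<bar> + (k - 1) * \<bar>em\<bar>"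
      using assms(2) by (intro abs_triangle_ineq[THEN order_trans]) (simp add: abs_mult)
    also have "\<dots> \<le> u * (2 * (R + u) * M * u)"
      using ep_le em_le by (simp add: algebra_simps)
    finally show ?thesis
      using assms(1) by (simp add: field_simps)
  qed
  finally show ?thesis .
qed

lemma up_difference_near_zero:
  assumes "u > 0" "k \<ge> 0" "z = u * k"
  shows "\<bar>(k + 1) * f (z + u) - k * f z - f 0\<bar> \<le> M * (2 * z + u)"
proof -
  have z: "z \<ge> 0" using assms by simp
  have "(k + 1) * f (z + u) - k * f z - f 0 = (f (z + u) - f 0) + k * (f (z + u) - f z)"
    by (simp add: algebra_simps)
  also have "\<bar>\<dots>\<bar> \<le> M * (z + u) + k * (M * u)"
    using z assms taylor_bounds(1)[of 0 "z + u"] taylor_bounds(1)[of z "z + u"]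
    by (intro abs_triangle_ineq[THEN order_trans] add_mono) (auto simp: abs_mult intro: mult_left_mono)
  finally show ?thesis
    by (simp add: assms(3) algebra_simps)
qed

lemma weighted_derivatives_bound:
  assumes "z \<ge> 0"
  shows "\<bar>z * (z * f'' z + 2 * f' z)\<bar> \<le> (R\<^sup>2 + 2 * R) * M"
proof (cases "z > R")
  case False
  with assms bounded[of z] have "\<bar>z * z * f'' z\<bar> \<le> R * R * M" "\<bar>2 * z * f' z\<bar> \<le> 2 * R * M"
    unfolding abs_mult by (auto intro!: mult_mono)
  then show ?thesis
    by (simp add: power2_eq_square algebra_simps abs_triangle_ineq[THEN order_trans])
qed (use vanish_beyond R_nonneg M_nonneg in auto)

lemma generator_profile_bound:
  assumes "z \<ge> 0"
  shows "\<bar>z * f'' z + (2 - z) * f' z + (f 0 - f z)\<bar> \<le> (2 * R + 4) * M"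
proof (cases "z > R")
  case False
  with assms bounded[of z] have "\<bar>z * f'' z\<bar> \<le> R * M" "\<bar>z * f' z\<bar> \<le> R * M"
    unfolding abs_mult by (auto intro!: mult_mono)
  with assms bounded[of z] bounded[of 0] show ?thesis
    by (simp add: abs_le_iff algebra_simps)
next
  case True
  have "M \<le> (2 * R + 4) * M"
    using R_nonneg M_nonneg by (simp add: distrib_right)
  with True vanish_beyond[of z] bounded[of 0] show ?thesis by simp
qed

lemma second_difference_term_bound:
  fixes n l d u k z :: real
  assumes "u > 0" "d > 0" "l > 0" "1 \<le> k" "k \<le> n" "z = u * k" "k / n = z / (d * l)"
  shows "\<bar>(1 - k / n) * (((k - 1) * f (z - u) - k * f z) + ((k + 1) * f (z + u) - k * f z)) / u
           - (z * f'' z + 2 * f' z)\<bar> \<le> 2 * (R + u) * M * u + (R\<^sup>2 + 2 * R) * M / (d * l)"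
    (is "\<bar>(1 - k / n) * ?D / u - ?W\<bar> \<le> _")
proof -
  have "(1 - k / n) * ?D / u - ?W = (1 - k / n) * (?D / u - ?W) - z * ?W / (d * l)"
    unfolding assms(7) using assms(1-3) by (simp add: field_simps)
  also have "\<bar>\<dots>\<bar> \<le> 1 * (2 * (R + u) * M * u) + (R\<^sup>2 + 2 * R) * M / (d * l)"
  proof (rule abs_triangle_ineq4[THEN order_trans], rule add_mono)
    show "\<bar>(1 - k / n) * (?D / u - ?W)\<bar> \<le> 1 * (2 * (R + u) * M * u)"
      using assms(4,5) second_difference_expansion[OF assms(1,4,6)] by (intro abs_mult_le) auto
    show "\<bar>z * ?W / (d * l)\<bar> \<le> (R\<^sup>2 + 2 * R) * M / (d * l)"
      using assms weighted_derivatives_bound[of z] by (simp add: abs_divide divide_right_mono)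
  qed
  finally show ?thesis by simp
qed

lemma first_difference_term_bound:
  fixes l u k z :: real
  assumes "u > 0" "l > 0" "1 \<le> k" "z = u * k"
  shows "\<bar>((l - 1) / l) * ((k - 1) * f (z - u) - k * f z) + f z + z * f' z\<bar>
           \<le> (R + u + 1) * M * u + (1 + R + u) * M / l"
proof -
  have "((l - 1) / l) * ((k - 1) * f (z - u) - k * f z) + f z + z * f' z
      = ((k - 1) * f (z - u) - k * f z + f z + z * f' z) - ((k - 1) * f (z - u) - k * f z) / l"
    using assms(2) by (simp add: field_simps)
  also have "\<bar>\<dots>\<bar> \<le> (R + u + 1) * M * u + (1 + R + u) * M / l"
    using assms(2) down_difference_expansion[OF assms(1,3,4)] down_difference_bound[OF assms(1,3,4)]
    by (intro abs_triangle_ineq4[THEN order_trans] add_mono) (auto simp: abs_divide divide_right_mono)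
  finally show ?thesis .
qed

definition error_rate :: "real \<Rightarrow> real \<Rightarrow> real \<Rightarrow> real" where
  "error_rate l d u = (3 * (R + u) + 1) * M * u + (R\<^sup>2 + 2 * R) * M / (d * l)
     + 2 * (1 + R + u) * M / l + 2 * M * d"

lemma site_error:
  fixes n l d u :: real and k :: nat
  assumes n: "n > 0" and l: "l > 0" and d: "d > 0" and un: "u * n = d * l" and kn: "real k \<le> n"
  defines "g \<equiv> \<lambda>j::nat. real j / n * f (u * real j)" and "z \<equiv> u * real k"
  shows "\<bar>real k * (d * (l - 1) + n - real k) * (g (k - 1) - g k) + (d + real k) * (n - real k) * (g (k + 1) - g k)
           - (d * l * (real k / n) * (z * f'' z + (2 - z) * f' z - f z) + d * f 0)\<bar>
         \<le> d * l * (real k / n * error_rate l d u + M * u / l)"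
proof -
  have u: "u > 0" using un n d l by (metis mult_pos_pos zero_less_mult_pos2)
  show ?thesis
  proof (cases "k = 0")
    case True
    have "\<bar>f u - f 0\<bar> \<le> M * u" using taylor_bounds(1)[of 0 u] u by simp
    then have "\<bar>d * f u - d * f 0\<bar> \<le> d * (M * u)"
      using d by (simp add: abs_mult right_diff_distrib[symmetric] mult_left_mono)
    with True n l show ?thesis by (simp add: g_def)
  next
    case False
    define kk where "kk = real k"
    define a where "a = (kk - 1) * f (z - u) - kk * f z"
    define b where "b = (kk + 1) * f (z + u) - kk * f z"
    have k1: "kk \<ge> 1" and z: "z = u * kk" and kn': "kk \<le> n" "kk / n \<le> 1"
      using False kn n by (simp_all add: kk_def z_def)
    have kz: "kk / n = z / (d * l)"
      using un n d l by (simp add: z field_simps)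
    have ga: "g (k - 1) - g k = a / n"
      using False n by (simp add: g_def a_def z_def kk_def of_nat_diff algebra_simps diff_divide_distrib add_divide_distrib)
    have gb: "g (k + 1) - g k = b / n"
      using n by (simp add: g_def b_def z_def kk_def algebra_simps diff_divide_distrib add_divide_distrib)
    have X4: "\<bar>(b - f 0) / l\<bar> \<le> kk / n * (2 * M * d) + M * u / l"
    proof -
      have "\<bar>(b - f 0) / l\<bar> \<le> M * (2 * z + u) / l"
        using l up_difference_near_zero[of u kk z] u k1 z unfolding b_def by (simp add: abs_divide divide_right_mono)
      also have "\<dots> = kk / n * (2 * M * d) + M * u / l"
        unfolding kz using d l by (simp add: field_simps)
      finally show ?thesis .
    qed
    have "\<bar>(kk / n) * ((1 - kk / n) * (a + b) / u - (z * f'' z + 2 * f' z))\<bar>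
        \<le> kk / n * (2 * (R + u) * M * u + (R\<^sup>2 + 2 * R) * M / (d * l))"
      using second_difference_term_bound[OF u d l k1 kn'(1) z kz] k1 n unfolding a_def b_def
      by (intro abs_mult_le) simp_all
    moreover have "\<bar>(kk / n) * (((l - 1) / l) * a + f z + z * f' z)\<bar>
        \<le> kk / n * ((R + u + 1) * M * u + (1 + R + u) * M / l)"
      using first_difference_term_bound[OF u l k1 z] k1 n unfolding a_def
      by (intro abs_mult_le) simp_all
    moreover have "\<bar>(kk / n) * (b / l)\<bar> \<le> kk / n * ((1 + R + u) * M / l)"
      using up_difference_bound[of u kk z] u k1 z l n unfolding b_def
      by (intro abs_mult_le) (simp_all add: abs_divide divide_right_mono)
    moreover have "kk / n * (2 * (R + u) * M * u + (R\<^sup>2 + 2 * R) * M / (d * l))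
        + kk / n * ((R + u + 1) * M * u + (1 + R + u) * M / l) + kk / n * ((1 + R + u) * M / l)
        + (kk / n * (2 * M * d) + M * u / l) = kk / n * error_rate l d u + M * u / l"
      unfolding error_rate_def by (simp add: algebra_simps)
    ultimately have "\<bar>(kk / n) * ((1 - kk / n) * (a + b) / u - (z * f'' z + 2 * f' z))
           + (kk / n) * (((l - 1) / l) * a + f z + z * f' z) - (kk / n) * b / l + (b - f 0) / l\<bar>
        \<le> kk / n * error_rate l d u + M * u / l"
      using X4 unfolding times_divide_eq_right[symmetric] by linarith
    then show ?thesis
      unfolding ga gb site_decomposition[OF n l d un] kk_def[symmetric]
      using d l by (simp add: abs_mult mult_left_mono)
  qed
qed

lemma Ahat_eq:
  assumes "hr h = f" "r > 0"
  shows "Ahat h (ennreal r) = r * f'' r + (2 - r) * f' r + (f 0 - f r)"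
proof -
  have D1f: "D1 f s = f' s" if "s > 0" for s
    using that deriv1[of s] by (intro D1_eqI) (auto simp: at_within_nonneg_eq_at)
  have "D1 (D1 f) r = f'' r"
    using assms(2) deriv2[of r] D1f by (intro D1_D1_eqI) (auto simp: at_within_nonneg_eq_at)
  moreover have "h 0 = f 0" "h (ennreal r) = f r"
    using assms(1) unfolding hr_def fun_eq_iff by (metis ennreal_0 order_refl)+
  ultimately show ?thesis
    using assms unfolding Ahat_def by (simp add: D1f Let_def)
qed

lemma Ahat_bound:
  assumes "hr h = f" "r > 0"
  shows "\<bar>Ahat h (ennreal r)\<bar> \<le> (2 * R + 4) * M"
  using Ahat_eq[OF assms] generator_profile_bound[of r] assms(2) by simp

lemma emp_profile_sum:
  assumes "hr h = f"
  shows "emp L N d \<xi> h = (\<Sum>x<L. real (\<xi> x) / real N * f (d * real L / real N * real (\<xi> x)))"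
  using assms unfolding emp_def hr_def fun_eq_iff by (simp add: mult_ac)

lemma emp_Ahat_site_sum:
  assumes h: "hr h = f" and \<eta>: "\<eta> \<in> Omega L N" and "N > 0" "L > 0" "d > 0"
  defines "u \<equiv> d * real L / real N"
  shows "d * real L * emp L N d \<eta> (Ahat h) = (\<Sum>x<L. d * real L * (real (\<eta> x) / real N) *
    (u * \<eta> x * f'' (u * \<eta> x) + (2 - u * \<eta> x) * f' (u * \<eta> x) - f (u * \<eta> x)) + d * f 0)"
proof -
  have "d * real L * emp L N d \<eta> (Ahat h) = (\<Sum>x<L. d * real L * (real (\<eta> x) / real N) *
      (u * \<eta> x * f'' (u * \<eta> x) + (2 - u * \<eta> x) * f' (u * \<eta> x) - f (u * \<eta> x))
      + d * real L * f 0 / real N * real (\<eta> x))"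
    unfolding emp_def sum_distrib_left
  proof (intro sum.cong refl)
    fix x
    show "d * real L * (real (\<eta> x) / real N * Ahat h (ennreal (d * real L * real (\<eta> x) / real N))) =
        d * real L * (real (\<eta> x) / real N) *
          (u * \<eta> x * f'' (u * \<eta> x) + (2 - u * \<eta> x) * f' (u * \<eta> x) - f (u * \<eta> x))
        + d * real L * f 0 / real N * real (\<eta> x)"
    proof (cases "\<eta> x = 0")
      case False
      have "d * real L * real (\<eta> x) / real N = u * real (\<eta> x)" by (simp add: u_def)
      moreover have "u * real (\<eta> x) > 0" using assms(3-5) False by (simp add: u_def)
      ultimately show ?thesis
        using assms(3) by (simp add: Ahat_eq[OF h] u_def field_simps)
    qed simp
  qed
  also have "\<dots> = (\<Sum>x<L. d * real L * (real (\<eta> x) / real N) *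
      (u * \<eta> x * f'' (u * \<eta> x) + (2 - u * \<eta> x) * f' (u * \<eta> x) - f (u * \<eta> x)) + d * f 0)"
  proof -
    have "(\<Sum>x<L. d * real L * f 0 / real N * real (\<eta> x)) = d * real L * f 0 / real N * real N"
      by (simp only: sum_distrib_left[symmetric] Omega_sum_real[OF \<eta>])
    then have "(\<Sum>x<L. d * real L * f 0 / real N * real (\<eta> x)) = (\<Sum>x<L. d * f 0)"
      using assms(3) by simp
    then show ?thesis by (simp add: sum.distrib)
  qed
  finally show ?thesis .
qed

lemma gen_emp_error:
  assumes h: "hr h = f" and \<eta>: "\<eta> \<in> Omega L N" and "N > 0" "L > 0" "d > 0"
  defines "u \<equiv> d * real L / real N"
  shows "\<bar>gen L d (\<lambda>\<xi>. emp L N d \<xi> h) \<eta> / (d * real L) - emp L N d \<eta> (Ahat h)\<bar>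
           \<le> error_rate (real L) d u + M * u"
proof -
  define n where "n = real N"
  define l where "l = real L"
  define g where "g j = real j / n * f (u * real j)" for j :: nat
  define S where "S x = real (\<eta> x) * (d * (l - 1) + n - real (\<eta> x)) * (g (\<eta> x - 1) - g (\<eta> x))
      + (d + real (\<eta> x)) * (n - real (\<eta> x)) * (g (\<eta> x + 1) - g (\<eta> x))" for x
  define T where "T x = d * l * (real (\<eta> x) / n) * (u * \<eta> x * f'' (u * \<eta> x) + (2 - u * \<eta> x) * f' (u * \<eta> x)
      - f (u * \<eta> x)) + d * f 0" for x
  have pos: "n > 0" "l > 0" "d > 0" "u * n = d * l"
    using assms(3-5) by (simp_all add: n_def l_def u_def)
  have N: "(\<Sum>x<L. real (\<eta> x)) = n" using Omega_sum_real[OF \<eta>] by (simp add: n_def)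
  have "(\<lambda>\<xi>. emp L N d \<xi> h) = (\<lambda>\<xi>. \<Sum>x<L. g (\<xi> x))"
    unfolding emp_profile_sum[OF h] g_def u_def n_def by (simp add: mult_ac)
  then have gen_eq: "gen L d (\<lambda>\<xi>. emp L N d \<xi> h) \<eta> = (\<Sum>x<L. S x)"
    unfolding S_def n_def l_def by (simp only: gen_sum_sites[OF \<eta>])
  have T_eq: "(\<Sum>x<L. T x) = d * l * emp L N d \<eta> (Ahat h)"
    unfolding emp_Ahat_site_sum[OF h \<eta> assms(3-5)] T_def n_def l_def u_def ..
  have "\<bar>(\<Sum>x<L. S x) - (\<Sum>x<L. T x)\<bar> \<le> (\<Sum>x<L. d * l * (real (\<eta> x) / n * error_rate l d u + M * u / l))"
    unfolding sum_subtractf[symmetric]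
  proof (rule sum_abs[THEN order_trans], rule sum_mono)
    fix x assume "x \<in> {..<L}"
    then have "real (\<eta> x) \<le> n" using Omega_le[OF \<eta>] by (simp add: n_def)
    then show "\<bar>S x - T x\<bar> \<le> d * l * (real (\<eta> x) / n * error_rate l d u + M * u / l)"
      unfolding S_def T_def g_def by (rule site_error[OF pos])
  qed
  also have "\<dots> = (\<Sum>x<L. d * l * error_rate l d u / n * real (\<eta> x) + d * M * u)"
    using pos by (intro sum.cong) (simp_all add: field_simps)
  also have "\<dots> = d * l * error_rate l d u / n * n + l * (d * M * u)"
    by (simp only: sum.distrib sum_distrib_left[symmetric] N) (simp add: l_def)
  also have "\<dots> = d * l * (error_rate l d u + M * u)"
    using pos by (simp add: field_simps)
  finally have "\<bar>(\<Sum>x<L. S x) - (\<Sum>x<L. T x)\<bar> / (d * l) \<le> error_rate l d u + M * u"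
    using pos by (simp add: divide_le_eq mult.commute)
  moreover have "gen L d (\<lambda>\<xi>. emp L N d \<xi> h) \<eta> / (d * l) - emp L N d \<eta> (Ahat h)
      = ((\<Sum>x<L. S x) - (\<Sum>x<L. T x)) / (d * l)"
    unfolding gen_eq T_eq using pos by (simp add: field_simps)
  ultimately show ?thesis
    using pos by (simp add: l_def abs_divide)
qed

lemma emp_jump_bound:
  assumes h: "hr h = f" and \<eta>: "\<eta> \<in> Omega L N" and "N > 0" "L > 0" "d > 0"
    and u1: "d * real L / real N \<le> 1"
    and xy: "x < L" "y < L" "x \<noteq> y" "0 < \<eta> x"
  shows "\<bar>emp L N d (jump \<eta> x y) h - emp L N d \<eta> h\<bar> \<le> (2 * R + 4) * M / real N"
proof -
  define u where "u = d * real L / real N"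
  define g where "g j = real j / real N * f (u * real j)" for j :: nat
  have u: "u > 0" using assms(3-5) by (simp add: u_def)
  have emp_eq: "emp L N d \<xi> h = (\<Sum>z<L. g (\<xi> z))" for \<xi>
    unfolding emp_profile_sum[OF h] g_def u_def by (simp add: mult_ac)
  have "real (\<eta> x - 1) = real (\<eta> x) - 1" using xy(4) by (simp add: of_nat_diff)
  then have down: "g (\<eta> x - 1) - g (\<eta> x) = ((real (\<eta> x) - 1) * f (u * \<eta> x - u) - \<eta> x * f (u * \<eta> x)) / real N"
    by (simp add: g_def algebra_simps diff_divide_distrib add_divide_distrib)
  have up: "g (\<eta> y + 1) - g (\<eta> y) = ((real (\<eta> y) + 1) * f (u * \<eta> y + u) - \<eta> y * f (u * \<eta> y)) / real N"
    by (simp add: g_def algebra_simps add_divide_distrib diff_divide_distrib)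
  have "emp L N d (jump \<eta> x y) h - emp L N d \<eta> h = (g (\<eta> x - 1) - g (\<eta> x)) + (g (\<eta> y + 1) - g (\<eta> y))"
    unfolding emp_eq sum_jump[OF xy(1-3)] by simp
  also have "\<bar>\<dots>\<bar> \<le> (1 + R + u) * M / real N + (1 + R + u) * M / real N"
    unfolding down up using u xy(4) assms(3)
    by (intro abs_triangle_ineq[THEN order_trans] add_mono)
      (auto simp: abs_divide intro!: divide_right_mono down_difference_bound up_difference_bound)
  also have "\<dots> = 2 * (1 + R + u) * M / real N"
    by simp
  also have "\<dots> \<le> (2 * R + 4) * M / real N"
    using u1 M_nonneg by (intro divide_right_mono mult_right_mono) (auto simp: u_def)
  finally show ?thesis .
qed

lemma tendsto_error_rate:
  assumes "(u \<longlongrightarrow> 0) F" "((\<lambda>x. 1 / (\<delta> x * l x)) \<longlongrightarrow> 0) F" "((\<lambda>x. 1 / l x) \<longlongrightarrow> 0) F"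
    "(\<delta> \<longlongrightarrow> 0) F"
  shows "((\<lambda>x. error_rate (l x) (\<delta> x) (u x) + M * u x) \<longlongrightarrow> 0) F"
proof -
  have "((\<lambda>x. (3 * (R + u x) + 1) * M * u x + (R\<^sup>2 + 2 * R) * M * (1 / (\<delta> x * l x))
      + 2 * (1 + R + u x) * M * (1 / l x) + 2 * M * \<delta> x + M * u x) \<longlongrightarrow>
      (3 * (R + 0) + 1) * M * 0 + (R\<^sup>2 + 2 * R) * M * 0 + 2 * (1 + R + 0) * M * 0 + 2 * M * 0 + M * 0) F"
    using assms by (intro tendsto_intros)
  then show ?thesis by (simp add: error_rate_def)
qed

end

section \<open>Polynomial functionals\<close>

definition leibniz_sum :: "('a \<Rightarrow> real) \<Rightarrow> ('a \<Rightarrow> real) \<Rightarrow> 'a list \<Rightarrow> real" where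
  "leibniz_sum f g xs = (\<Sum>k<length xs. f (xs ! k) * (\<Prod>m\<in>{..<length xs} - {k}. g (xs ! m)))"

lemma leibniz_sum_Nil: "leibniz_sum f g [] = 0"
  by (simp add: leibniz_sum_def)

lemma leibniz_sum_Cons:
  "leibniz_sum f g (x # xs) = f x * prod_list (map g xs) + g x * leibniz_sum f g xs"
proof -
  have except_Suc: "{..<Suc n} - {Suc k} = insert 0 (Suc ` ({..<n} - {k}))" for n k
    unfolding lessThan_Suc_eq_insert_0 by auto
  have except_0: "{..<Suc n} - {0} = Suc ` {..<n}" for n
    unfolding lessThan_Suc_eq_insert_0 by auto
  have "prod_list (map g xs) = (\<Prod>m<length xs. g (xs ! m))"
    by (induction xs) (simp_all add: prod.lessThan_Suc_shift del: prod.lessThan_Suc)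
  then show ?thesis
    unfolding leibniz_sum_def
    by (simp add: sum.lessThan_Suc_shift except_Suc except_0 prod.reindex sum_distrib_left mult.left_commute
             del: sum.lessThan_Suc)
qed

lemma evalH_Cons: "evalH ((c, hs) # P) \<mu> = c * prod_list (map \<mu> hs) + evalH P \<mu>"
  by (simp add: evalH_def)

lemma genH_Cons: "genH ((c, hs) # P) \<mu> = c * leibniz_sum (\<lambda>h. \<mu> (Ahat h)) \<mu> hs + genH P \<mu>"
  by (simp add: genH_def leibniz_sum_def)

context inclusion_scaling
begin

lemma approx_gen_one: "approx_gen (ratio_limit \<rho>) d (\<lambda>_ _ _. 1) (\<lambda>_ _ _. 0)"
  unfolding approx_gen_def unif_bounded_def small_jumps_def
  by (intro conjI exI[of _ 1] unif_vanishing_le[of "\<lambda>_. 0"]) (simp_all add: gen_def case_prod_beta')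

lemma approx_gen_emp_const:
  "approx_gen (ratio_limit \<rho>) d (\<lambda>L N \<xi>. emp L N (d L) \<xi> (\<lambda>_. c)) (\<lambda>L N \<eta>. emp L N (d L) \<eta> (Ahat (\<lambda>_. c)))"
proof -
  have "\<forall>\<^sub>F (L, N) in ratio_limit \<rho>. \<forall>\<eta>\<in>Omega L N. emp L N (d L) \<eta> (\<lambda>_. c) = c \<and>
     emp L N (d L) \<eta> (Ahat (\<lambda>_. c)) = 0 \<and> gen L (d L) (\<lambda>\<xi>. emp L N (d L) \<xi> (\<lambda>_. c)) \<eta> = 0 \<and>
     (\<forall>x<L. \<forall>y<L. x \<noteq> y \<longrightarrow> 0 < \<eta> x \<longrightarrow> emp L N (d L) (jump \<eta> x y) (\<lambda>_. c) = c)"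
    using eventually_sizes_pos
    by eventually_elim (auto simp: emp_const emp_Ahat_const gen_emp_const jump_Omega)
  then show ?thesis
    unfolding approx_gen_def unif_bounded_def small_jumps_def
    by (intro conjI exI[of _ "\<bar>c\<bar>"] exI[of _ 0] unif_vanishing_le[of "\<lambda>_. 0"])
       (auto elim!: eventually_mono)
qed

lemma approx_gen_emp_C3:
  assumes "C3c_Rplus (hr h)"
  shows "approx_gen (ratio_limit \<rho>) d (\<lambda>L N \<xi>. emp L N (d L) \<xi> h) (\<lambda>L N \<eta>. emp L N (d L) \<eta> (Ahat h))"
proof -
  obtain f' f'' f''' R M where "C3c_profile (hr h) f' f'' f''' R M"
    using C3c_profile_exists[OF assms] .
  then interpret C3c_profile "hr h" f' f'' f''' R M .
  let ?F = "ratio_limit \<rho>"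
  have spacing_le_1: "\<forall>\<^sub>F (L, N) in ?F. d L * real L / real N < 1"
    using order_tendstoD(2)[OF tendsto_spacing zero_less_one] by (simp add: case_prod_beta')
  have "\<forall>\<^sub>F (L, N) in ?F. \<forall>\<eta>\<in>Omega L N. \<bar>emp L N (d L) \<eta> h\<bar> \<le> M"
    using eventually_sizes_pos
    by eventually_elim (auto intro!: emp_abs_le simp: bounded hr_def[symmetric])
  moreover have "\<forall>\<^sub>F (L, N) in ?F. \<forall>\<eta>\<in>Omega L N. \<bar>emp L N (d L) \<eta> (Ahat h)\<bar> \<le> (2 * R + 4) * M"
    using eventually_sizes_pos
    by eventually_elim (auto intro!: emp_abs_le Ahat_bound)
  moreover have "\<forall>\<^sub>F (L, N) in ?F. \<forall>\<eta>\<in>Omega L N. \<forall>x<L. \<forall>y<L. x \<noteq> y \<longrightarrow> 0 < \<eta> x \<longrightarrow>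
      \<bar>emp L N (d L) (jump \<eta> x y) h - emp L N (d L) \<eta> h\<bar> \<le> (2 * R + 4) * M / real N"
    using eventually_sizes_pos spacing_le_1
    by eventually_elim (auto intro!: emp_jump_bound)
  moreover have "unif_vanishing ?F (\<lambda>L N \<eta>.
      gen L (d L) (\<lambda>\<xi>. emp L N (d L) \<xi> h) \<eta> / (d L * real L) - emp L N (d L) \<eta> (Ahat h))"
  proof (rule unif_vanishing_le)
    show "((\<lambda>(L, N). error_rate (real L) (d L) (d L * real L / real N) + M * (d L * real L / real N))
        \<longlongrightarrow> 0) ?F"
      using tendsto_error_rate[of "\<lambda>(L, N). d L * real L / real N" ?F "\<lambda>(L, N). d L" "\<lambda>(L, N). real L"]
        tendsto_spacing tendsto_inverse_dL tendsto_inverse_L tendsto_d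
      by (simp add: case_prod_beta')
    show "\<forall>\<^sub>F (L, N) in ?F. \<forall>\<eta>\<in>Omega L N.
        \<bar>gen L (d L) (\<lambda>\<xi>. emp L N (d L) \<xi> h) \<eta> / (d L * real L) - emp L N (d L) \<eta> (Ahat h)\<bar>
        \<le> (case (L, N) of (L, N) \<Rightarrow>
              error_rate (real L) (d L) (d L * real L / real N) + M * (d L * real L / real N))"
      using eventually_sizes_pos
      by eventually_elim (auto simp del: times_divide_eq_right intro!: gen_emp_error)
  qed
  ultimately show ?thesis
    unfolding approx_gen_def unif_bounded_def small_jumps_def by blast
qed

lemma approx_gen_emp:
  assumes "domA h"
  shows "approx_gen (ratio_limit \<rho>) d (\<lambda>L N \<xi>. emp L N (d L) \<xi> h) (\<lambda>L N \<eta>. emp L N (d L) \<eta> (Ahat h))"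
  using assms approx_gen_emp_C3 approx_gen_emp_const unfolding domA_def by auto

lemma approx_gen_monomial:
  assumes "\<forall>h\<in>set hs. domA h"
  shows "approx_gen (ratio_limit \<rho>) d (\<lambda>L N \<xi>. prod_list (map (emp L N (d L) \<xi>) hs))
    (\<lambda>L N \<eta>. leibniz_sum (\<lambda>h. emp L N (d L) \<eta> (Ahat h)) (emp L N (d L) \<eta>) hs)"
  using assms
proof (induction hs)
  case Nil
  then show ?case using approx_gen_one by (simp add: leibniz_sum_Nil)
next
  case (Cons h hs)
  then show ?case
    unfolding leibniz_sum_Cons list.map prod_list.Cons by (intro approx_gen_mult approx_gen_emp Cons.IH) auto
qed

lemma unif_vanishing_polynomial:
  assumes "polyrep_ok P"
  shows "unif_vanishing (ratio_limit \<rho>)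
    (\<lambda>L N \<eta>. gen L (d L) (\<lambda>\<xi>. evalH P (emp L N (d L) \<xi>)) \<eta> / (d L * real L) - genH P (emp L N (d L) \<eta>))"
  using assms
proof (induction P)
  case Nil
  show ?case
    by (rule unif_vanishing_le[of "\<lambda>_. 0"]) (simp_all add: evalH_def genH_def gen_def case_prod_beta')
next
  case (Cons p P)
  obtain c hs where p: "p = (c, hs)" by fastforce
  with Cons.prems have "polyrep_ok P" "\<forall>h\<in>set hs. domA h"
    unfolding polyrep_ok_def by auto
  with Cons.IH approx_gen_monomial have "unif_vanishing (ratio_limit \<rho>) (\<lambda>L N \<eta>.
      c * (gen L (d L) (\<lambda>\<xi>. prod_list (map (emp L N (d L) \<xi>) hs)) \<eta> / (d L * real L) -
        leibniz_sum (\<lambda>h. emp L N (d L) \<eta> (Ahat h)) (emp L N (d L) \<eta>) hs)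
      + (gen L (d L) (\<lambda>\<xi>. evalH P (emp L N (d L) \<xi>)) \<eta> / (d L * real L) - genH P (emp L N (d L) \<eta>)))"
    unfolding approx_gen_def by (intro unif_vanishing_add unif_vanishing_cmult) auto
  then show ?case
    unfolding p evalH_Cons genH_Cons gen_add gen_cmult by (simp add: algebra_simps add_divide_distrib)
qed

end

theorem proposition3p1:
  fixes \<rho> :: real and d :: "nat \<Rightarrow> real" and P :: polyrep
  assumes "\<rho> > 0"
    and "d \<longlonglongrightarrow> 0"
    and "filterlim (\<lambda>L. d L * real L) at_top sequentially"
    and "polyrep_ok P"
  shows "\<forall>\<epsilon>>0. \<exists>\<delta>>0. \<exists>L0. \<forall>L N. L \<ge> L0 \<and> \<bar>real N / real L - \<rho>\<bar> < \<delta> \<longrightarrow>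
           (\<forall>\<eta>\<in>Omega L N.
              \<bar>gen L (d L) (\<lambda>\<xi>. evalH P (emp L N (d L) \<xi>)) \<eta> / (d L * real L)
               - genH P (emp L N (d L) \<eta>)\<bar> \<le> \<epsilon>)"
proof -
  interpret inclusion_scaling \<rho> d
    using assms(1-3) by unfold_locales
  show ?thesis
    using unif_vanishing_polynomial[OF assms(4)]
    unfolding unif_vanishing_def eventually_ratio_limit by simp
qed

end
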